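(* Let $N\in\mathbb N$, $p>1$, and $\mathfrak h_{p,N}(x)=\sum_{n\in\mathbb Z,\ |x-n|>N}|\mathrm{sinc}(x-n)|^p$ for $x\in\mathbb R$. (a) If $N\ge \frac1\pi\sqrt{(p+2)(1+p^{-1})}-\frac12$, then $x=1/2$ is a local maximum point of $\mathfrak h_{p,N}$. (b) If $p\le \frac18\big(9\pi^2+\sqrt{16-216\pi^2+81\pi^4}-12\big)\ (\approx 19.1019)$, then $x=1/2$ is a local maximum point of $\mathfrak h_{p,N}$ for every $N\in\mathbb N$.
   Context: $\mathrm{sinc}(x)=\frac{\sin(\pi x)}{\pi x}$ for $x\neq0$ and $\mathrm{sinc}(0)=1$. *)

theory Defs
  imports "HOL-Analysis.Analysis"
begin

definition sinc :: "real \<Rightarrow> real" where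
  "sinc x = (if x = 0 then 1 else sin (pi * x) / (pi * x))"

definition hpN :: "real \<Rightarrow> nat \<Rightarrow> real \<Rightarrow> real" where
  "hpN p N x = infsum (\<lambda>n::int. \<bar>sinc (x - of_int n)\<bar> powr p) {n::int. \<bar>x - of_int n\<bar> > real N}"

definition local_max_point :: "(real \<Rightarrow> real) \<Rightarrow> real \<Rightarrow> bool" where
  "local_max_point f a \<longleftrightarrow> (\<exists>d>0. \<forall>x. \<bar>x - a\<bar> < d \<longrightarrow> f x \<le> f a)"

end

theory Submission
  imports Defs
begin

text \<open>For \<open>|t| < 1/2\<close> every summand of \<open>hpN p N (1/2 + t)\<close> has numerator \<open>cos (\<pi> t)\<close>, so
  \<open>hpN p N (1/2 + t) = (cos (\<pi> t) / \<pi>)\<^sup>p \<Sigma> |1/2 + t - n|\<^sup>-\<^sup>p\<close> over the fixed index set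
  \<open>|1/2 - n| > N\<close>. The reflection \<open>n \<mapsto> 1 - n\<close> pairs the summands into
  \<open>(a + t)\<^sup>-\<^sup>p + (a - t)\<^sup>-\<^sup>p\<close> with \<open>a = |1/2 - n| \<ge> N + 1/2\<close>. To second order in \<open>t\<close>, the
  factor \<open>cos\<^sup>p (\<pi> t)\<close> loses a fraction \<open>p \<pi>\<^sup>2 t\<^sup>2 / 2\<close> while the pair gains a fraction
  \<open>p (p + 1) t\<^sup>2 / (2 a\<^sup>2)\<close>, so each weighted pair is maximal at \<open>t = 0\<close> as soon as
  \<open>p + 1 < \<pi>\<^sup>2 (N + 1/2)\<^sup>2\<close>; a derivative computation makes this exact on a neighbourhood
  of \<open>0\<close> that is uniform in \<open>a\<close>.
  Both hypotheses of the theorem imply this inequality.\<close>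

lemma powr_neg_ge_tangent:
  fixes x y q :: real
  assumes "0 < y" "0 < x" "0 \<le> q"
  shows "y powr (-q) - q * y powr (-q-1) * (x - y) \<le> x powr (-q)"
proof -
  have xy: "x powr (-q) = y powr (-q) * exp (-q * ln (x/y))"
    using assms by (simp add: powr_def ln_div exp_add[symmetric] algebra_simps exp_diff exp_minus field_simps)
  have "1 - q * ln (x/y) \<le> exp (-q * ln (x/y))"
    using exp_ge_add_one_self[of "-q * ln (x/y)"] by simp
  moreover have "ln (x/y) \<le> x/y - 1"
    using assms by (intro ln_le_minus_one) simp
  hence "1 - q * (x/y - 1) \<le> 1 - q * ln (x/y)"
    using assms(3) by (simp add: mult_left_mono)
  ultimately have "y powr (-q) * (1 - q * (x/y - 1)) \<le> x powr (-q)"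
    unfolding xy by (intro mult_left_mono) auto
  moreover have "y powr (-q-1) = y powr (-q) / y"
    using assms by (simp add: powr_diff)
  then have "y powr (-q) * (1 - q * (x/y - 1)) = y powr (-q) - q * y powr (-q-1) * (x - y)"
    using assms by (simp add: field_simps)
  ultimately show ?thesis
    by simp
qed

lemma x_cos_le_sin:
  fixes x :: real
  assumes "0 \<le> x" "x \<le> pi"
  shows "x * cos x \<le> sin x"
proof -
  have "(\<lambda>u. sin u - u * cos u) 0 \<le> (\<lambda>u. sin u - u * cos u) x"
  proof (rule DERIV_nonneg_imp_nondecreasing[OF assms(1)])
    fix u assume u: "0 \<le> u" "u \<le> x"
    have "((\<lambda>u. sin u - u * cos u) has_real_derivative u * sin u) (at u)"
      by (rule derivative_eq_intros refl | simp)+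
    moreover have "0 \<le> u * sin u"
      using u assms by (auto intro!: mult_nonneg_nonneg sin_ge_zero)
    ultimately show "\<exists>y. ((\<lambda>u. sin u - u * cos u) has_real_derivative y) (at u) \<and> 0 \<le> y"
      by blast
  qed
  thus ?thesis by simp
qed

lemma cos_pi_gt_zero:
  assumes "\<bar>t\<bar> < 1/2"
  shows "cos (pi * t) > 0"
proof (rule cos_gt_zero_pi)
  have "pi * \<bar>t\<bar> < pi * (1/2)"
    using assms by (intro mult_strict_left_mono) auto
  then have "\<bar>pi * t\<bar> < pi / 2"
    by (simp add: abs_mult)
  then show "- (pi / 2) < pi * t" "pi * t < pi / 2"
    by linarith+
qed

definition cos_powr_pair :: "real \<Rightarrow> real \<Rightarrow> real \<Rightarrow> real" where
  "cos_powr_pair p a s = cos (pi * s) powr p * ((a + s) powr (-p) + (a - s) powr (-p))"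

text \<open>\<open>pair_curvature p a s = (p + 1) (a - s)\<^sup>-\<^sup>p\<^sup>-\<^sup>2 / a\<^sup>-\<^sup>p\<close>; the derivative of \<open>cos_powr_pair p a\<close>
  is \<open>\<le> 0\<close> at \<open>s\<close> as long as it is at most \<open>\<pi>\<^sup>2\<close>. At \<open>s = 0\<close> it is the threshold \<open>(p + 1) / a\<^sup>2\<close>.\<close>

definition pair_curvature :: "real \<Rightarrow> real \<Rightarrow> real \<Rightarrow> real" where
  "pair_curvature p a s = (p + 1) * (a / (a - s)) powr p / (a - s)^2"

lemma cos_powr_pair_minus [simp]: "cos_powr_pair p a (-s) = cos_powr_pair p a s"
  by (simp add: cos_powr_pair_def)

lemma cos_powr_pair_0 [simp]: "cos_powr_pair p a 0 = 2 * a powr (-p)"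
  by (simp add: cos_powr_pair_def)

lemma cos_powr_pair_has_derivative:
  assumes "cos (pi * s) > 0" "\<bar>s\<bar> < a"
  shows "(cos_powr_pair p a has_real_derivative
     p * cos (pi * s) powr (p-1) *
       (cos (pi * s) * ((a - s) powr (-p-1) - (a + s) powr (-p-1))
        - pi * sin (pi * s) * ((a + s) powr (-p) + (a - s) powr (-p)))) (at s)"
proof -
  have pos: "a + s > 0" "a - s > 0"
    using assms(2) by auto
  have "((\<lambda>s. cos (pi * s)) has_real_derivative (-(sin (pi * s) * pi))) (at s)"
       "((\<lambda>s. a + s) has_real_derivative 1) (at s)"
       "((\<lambda>s. a - s) has_real_derivative -1) (at s)"
    by (auto intro!: derivative_eq_intros)
  note D = DERIV_mult[OF DERIV_fun_powr[OF this(1) assms(1), of p]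
             DERIV_add[OF DERIV_fun_powr[OF this(2) pos(1), of "-p"]
                          DERIV_fun_powr[OF this(3) pos(2), of "-p"]]]
  have cos_split: "cos (pi * s) powr p = cos (pi * s) powr (p-1) * cos (pi * s)"
    using assms(1) by (simp add: powr_diff)
  show ?thesis
    unfolding cos_powr_pair_def
    by (rule DERIV_cong[OF D]) (simp add: cos_split algebra_simps)
qed

lemma cos_powr_pair_deriv_factor_nonpos:
  fixes p a s :: real
  assumes "0 \<le> p" "0 \<le> s" "s < 1/2" "s < a"
    and curv: "pair_curvature p a s \<le> pi^2"
  shows "cos (pi * s) * ((a - s) powr (-p-1) - (a + s) powr (-p-1))
           - pi * sin (pi * s) * ((a + s) powr (-p) + (a - s) powr (-p)) \<le> 0"
proof -
  define c where "c = cos (pi * s)"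
  have a: "a > 0" "a + s > 0" "a - s > 0"
    using assms by auto
  have c: "c > 0"
    unfolding c_def using assms by (intro cos_pi_gt_zero) auto
  have sin_ge: "pi * s * c \<le> sin (pi * s)"
    unfolding c_def using assms by (intro x_cos_le_sin) auto
  have pair_ge: "2 * a powr (-p) \<le> (a + s) powr (-p) + (a - s) powr (-p)"
    using powr_neg_ge_tangent[of a "a + s" p] powr_neg_ge_tangent[of a "a - s" p] a assms(1)
    by simp
  have "-(p+1) = -p-1" and "-(p+1)-1 = -p-2"
    by simp_all
  note tangent = powr_neg_ge_tangent[of "a - s" "a + s" "p + 1", unfolded this]
  have diff_le: "(a - s) powr (-p-1) - (a + s) powr (-p-1) \<le> (p+1) * (2 * s) * (a - s) powr (-p-2)"
    using tangent a assms(1) by (simp add: algebra_simps)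
  have "(p+1) * (a - s) powr (-p-2) = a powr (-p) * pair_curvature p a s"
    using a by (simp add: pair_curvature_def powr_divide powr_diff powr_minus field_simps)
  also have "\<dots> \<le> a powr (-p) * pi^2"
    using curv by (intro mult_left_mono) auto
  finally have curv': "(p+1) * (a - s) powr (-p-2) \<le> a powr (-p) * pi^2" .
  have "c * ((a - s) powr (-p-1) - (a + s) powr (-p-1)) \<le> c * (2 * s) * ((p+1) * (a - s) powr (-p-2))"
    using mult_left_mono[OF diff_le, of c] c by (simp add: algebra_simps)
  also have "\<dots> \<le> c * (2 * s) * (a powr (-p) * pi^2)"
    using curv' c assms(2) by (intro mult_left_mono) auto
  also have "\<dots> = (pi * s * c) * pi * (2 * a powr (-p))"
    by (simp add: algebra_simps power2_eq_square)
  also have "\<dots> \<le> (pi * s * c) * pi * ((a + s) powr (-p) + (a - s) powr (-p))"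
    using pair_ge c assms(2) by (intro mult_left_mono) auto
  also have "\<dots> \<le> sin (pi * s) * pi * ((a + s) powr (-p) + (a - s) powr (-p))"
    using sin_ge by (intro mult_right_mono) auto
  finally show ?thesis
    unfolding c_def by (simp add: algebra_simps)
qed

lemma cos_powr_pair_le:
  assumes "0 \<le> p" "\<bar>t\<bar> < 1/2" "\<bar>t\<bar> < a"
    and curv: "\<And>s. 0 \<le> s \<Longrightarrow> s \<le> \<bar>t\<bar> \<Longrightarrow> pair_curvature p a s \<le> pi^2"
  shows "cos_powr_pair p a t \<le> 2 * a powr (-p)"
proof -
  have "cos_powr_pair p a \<bar>t\<bar> \<le> cos_powr_pair p a 0"
  proof (rule DERIV_nonpos_imp_nonincreasing[OF abs_ge_zero])
    fix s assume s: "0 \<le> s" "s \<le> \<bar>t\<bar>"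
    have "cos (pi * s) > 0"
      using s assms by (intro cos_pi_gt_zero) auto
    moreover have "p * cos (pi * s) powr (p-1) \<ge> 0"
      using assms(1) by simp
    ultimately show "\<exists>D. (cos_powr_pair p a has_real_derivative D) (at s) \<and> D \<le> 0"
      using cos_powr_pair_has_derivative[of s a p] s assms
        cos_powr_pair_deriv_factor_nonpos[of p s a] curv[OF s]
      by (force intro: mult_nonneg_nonpos)
  qed
  moreover have "cos_powr_pair p a \<bar>t\<bar> = cos_powr_pair p a t"
    by (simp add: abs_if)
  ultimately show ?thesis
    by simp
qed

lemma pair_curvature_antimono:
  assumes "0 \<le> p" "0 \<le> s" "s < b" "b \<le> a"
  shows "pair_curvature p a s \<le> pair_curvature p b s"
proof -
  have "(a / (a - s)) powr p \<le> (b / (b - s)) powr p"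
    using assms by (intro powr_mono2) (auto simp: field_simps mult_right_mono)
  moreover have "1 / (a - s)^2 \<le> 1 / (b - s)^2"
    using assms by (intro divide_left_mono power_mono) auto
  ultimately have "(a / (a - s)) powr p * (1 / (a - s)^2) \<le> (b / (b - s)) powr p * (1 / (b - s)^2)"
    by (rule mult_mono) auto
  from mult_left_mono[OF this, of "p + 1"] show ?thesis
    unfolding pair_curvature_def using assms(1) by simp
qed

lemma pair_curvature_small:
  assumes "0 < b" "p + 1 < pi^2 * b^2"
  shows "\<exists>d>0. d \<le> 1/4 \<and> (\<forall>s. 0 \<le> s \<and> s < d \<longrightarrow> pair_curvature p b s \<le> pi^2)"
proof -
  have "isCont (pair_curvature p b) 0"
    unfolding pair_curvature_def using assms(1) by (intro continuous_intros) auto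
  moreover have "pair_curvature p b 0 < pi^2"
    unfolding pair_curvature_def using assms by (simp add: field_simps)
  ultimately have "eventually (\<lambda>s. pair_curvature p b s < pi^2) (nhds 0)"
    by (intro order_tendstoD) (simp_all add: isCont_def tendsto_at_iff_tendsto_nhds)
  then obtain d where "d > 0" "\<And>s. \<bar>s\<bar> < d \<Longrightarrow> pair_curvature p b s \<le> pi^2"
    unfolding eventually_nhds_metric dist_real_def by (auto intro: less_imp_le)
  then show ?thesis
    by (intro exI[of _ "min d (1/4)"]) auto
qed

definition far_ints :: "nat \<Rightarrow> int set" where
  "far_ints N = {n. real N < \<bar>1/2 - of_int n\<bar>}"

definition lattice_sum :: "real \<Rightarrow> nat \<Rightarrow> real \<Rightarrow> real" where
  "lattice_sum p N t = infsum (\<lambda>n::int. \<bar>1/2 + t - of_int n\<bar> powr (-p)) (far_ints N)"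

lemma half_shift_dist_gt_iff:
  fixes n :: int
  assumes "\<bar>t\<bar> < 1/2"
  shows "real N < \<bar>1/2 + t - of_int n\<bar> \<longleftrightarrow> n \<le> - int N \<or> int N + 1 \<le> n"
proof (cases "n \<le> 0")
  case True
  then have "\<bar>1/2 + t - of_int n\<bar> = 1/2 + t - of_int n"
    using assms by auto
  moreover have "n \<le> - int N \<longleftrightarrow> real_of_int n \<le> - real N"
    and "\<not> n \<le> - int N \<longleftrightarrow> real_of_int n \<ge> 1 - real N"
    by linarith+
  ultimately show ?thesis
    using True assms by auto
next
  case False
  then have "\<bar>1/2 + t - of_int n\<bar> = of_int n - 1/2 - t"
    using assms by auto
  moreover have "n \<ge> int N + 1 \<longleftrightarrow> real_of_int n \<ge> real N + 1"
    and "\<not> n \<ge> int N + 1 \<longleftrightarrow> real_of_int n \<le> real N"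
    by linarith+
  ultimately show ?thesis
    using False assms by auto
qed

lemma far_ints_half_shift:
  "\<bar>t\<bar> < 1/2 \<Longrightarrow> {n. real N < \<bar>1/2 + t - of_int n\<bar>} = far_ints N"
  unfolding far_ints_def using half_shift_dist_gt_iff[of t N] half_shift_dist_gt_iff[of 0 N] by auto

lemma far_ints_dist_ge:
  "n \<in> far_ints N \<Longrightarrow> real N + 1/2 \<le> \<bar>1/2 - of_int n\<bar>"
  using half_shift_dist_gt_iff[of 0 N n] unfolding far_ints_def by auto

lemma abs_sin_half_shift: "\<bar>sin (pi * (1/2 + t - of_int n))\<bar> = \<bar>cos (pi * t)\<bar>"
proof -
  have "pi * (1/2 + t - of_int n) = (pi/2 + pi * t) - of_int n * pi"
    by (simp add: algebra_simps)
  moreover have "sin (of_int n * pi) = 0"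
    by (auto simp: sin_zero_iff_int2)
  moreover from this have "\<bar>cos (of_int n * pi)\<bar> = 1"
    using sin_cos_squared_add[of "of_int n * pi"]
    by (simp add: abs_square_eq_1 power2_eq_square[symmetric])
  ultimately show ?thesis
    by (simp add: sin_diff sin_add abs_mult)
qed

lemma abs_sinc_half_shift_powr:
  fixes n :: int
  assumes t: "\<bar>t\<bar> < 1/2"
  shows "\<bar>sinc (1/2 + t - of_int n)\<bar> powr p = (cos (pi * t) / pi) powr p * \<bar>1/2 + t - of_int n\<bar> powr (-p)"
proof -
  define y where "y = 1/2 + t - of_int n"
  have "y \<noteq> 0"
  proof
    assume "y = 0"
    then have "0 < real_of_int n" "real_of_int n < 1"
      using t unfolding y_def by auto
    then have "0 < n" "n < 1"
      by linarith+
    then show False by simp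
  qed
  moreover have "cos (pi * t) > 0"
    using t by (rule cos_pi_gt_zero)
  ultimately have "\<bar>sinc y\<bar> = cos (pi * t) / pi / \<bar>y\<bar>"
    using abs_sin_half_shift[of t n] unfolding sinc_def y_def by (simp add: abs_mult abs_divide)
  then have "\<bar>sinc y\<bar> powr p = (cos (pi * t) / pi) powr p / \<bar>y\<bar> powr p"
    unfolding powr_divide[of "cos (pi * t) / pi" "\<bar>y\<bar>" p, symmetric] by simp
  also have "\<dots> = (cos (pi * t) / pi) powr p * \<bar>y\<bar> powr (-p)"
    by (simp add: powr_minus divide_inverse)
  finally show ?thesis
    unfolding y_def .
qed
lemma hpN_half_shift:
  assumes "\<bar>t\<bar> < 1/2"
  shows "hpN p N (1/2 + t) = (cos (pi * t) / pi) powr p * lattice_sum p N t"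
proof -
  have "hpN p N (1/2 + t)
        = infsum (\<lambda>n. (cos (pi * t) / pi) powr p * \<bar>1/2 + t - of_int n\<bar> powr (-p)) (far_ints N)"
    unfolding hpN_def far_ints_half_shift[OF assms] abs_sinc_half_shift_powr[OF assms] ..
  also have "\<dots> = (cos (pi * t) / pi) powr p * lattice_sum p N t"
    unfolding lattice_sum_def by (rule infsum_cmult_right')
  finally show ?thesis .
qed

lemma lattice_sum_minus: "lattice_sum p N (-t) = lattice_sum p N t"
  unfolding lattice_sum_def
  by (rule infsum_reindex_bij_witness[of _ "\<lambda>n. 1 - n" "\<lambda>n. 1 - n"])
     (auto simp: far_ints_def abs_minus_commute algebra_simps)

lemma summable_powr_nat_plus_half:
  fixes p :: real
  assumes "p > 1"
  shows "(\<lambda>k::nat. (real k + 1/2) powr (-p)) summable_on UNIV"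
proof -
  have "summable (\<lambda>n. real n powr (-p))"
    using assms by (subst summable_real_powr_iff) auto
  then have "summable (\<lambda>n. 2 powr p * real (Suc n) powr (-p))"
    by (subst (asm) summable_Suc_iff[symmetric]) (rule summable_mult)
  then have "summable (\<lambda>k::nat. (real k + 1/2) powr (-p))"
  proof (rule summable_comparison_test'[of _ 0])
    fix n :: nat
    have "(real n + 1/2) powr (-p) \<le> (real (Suc n) / 2) powr (-p)"
      using assms by (intro powr_mono2') auto
    also have "\<dots> = 2 powr p * real (Suc n) powr (-p)"
      by (simp add: powr_divide powr_minus field_simps del: of_nat_Suc)
    finally show "norm ((real n + 1/2) powr (-p)) \<le> 2 powr p * real (Suc n) powr (-p)"
      by simp
  qed
  then show ?thesis
    by (subst summable_on_UNIV_nonneg_real_iff) auto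
qed

lemma summable_on_powr_half_lattice:
  fixes p :: real
  assumes "p > 1"
  shows "(\<lambda>n::int. \<bar>1/2 - of_int n\<bar> powr (-p)) summable_on UNIV"
proof -
  define g where "g = (\<lambda>n::int. \<bar>1/2 - of_int n\<bar> powr (-p))"
  have "g summable_on {1..}"
    by (subst summable_on_reindex_bij_witness[of _ "\<lambda>k. int k + 1" "\<lambda>n. nat (n - 1)" UNIV
          "\<lambda>k. (real k + 1/2) powr (-p)"])
       (use summable_powr_nat_plus_half[OF assms] in \<open>auto simp: g_def add.commute\<close>)
  moreover have "g summable_on {..0}"
    by (subst summable_on_reindex_bij_witness[of _ "\<lambda>k. - int k" "\<lambda>n. nat (- n)" UNIV
          "\<lambda>k. (real k + 1/2) powr (-p)"])
       (use summable_powr_nat_plus_half[OF assms] in \<open>auto simp: g_def add.commute\<close>)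
  ultimately have "g summable_on ({1..} \<union> {..0})"
    by (rule summable_on_Un_disjoint) auto
  moreover have "{1..} \<union> {..0} = (UNIV :: int set)"
    by auto
  ultimately show ?thesis
    unfolding g_def by simp
qed

lemma summable_on_powr_shifted_half_lattice:
  fixes p t :: real
  assumes "p > 1" "\<bar>t\<bar> \<le> 1/4"
  shows "(\<lambda>n::int. \<bar>1/2 + t - of_int n\<bar> powr (-p)) summable_on A"
proof (rule summable_on_subset_banach[OF _ subset_UNIV], rule summable_on_comparison_test)
  show "(\<lambda>n::int. 2 powr p * \<bar>1/2 - of_int n\<bar> powr (-p)) summable_on UNIV"
    by (intro summable_on_cmult_right summable_on_powr_half_lattice assms(1))
  fix n :: int
  have half: "1/2 \<le> \<bar>1/2 - real_of_int n\<bar>"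
    by (cases "n \<le> 0") auto
  moreover have "\<bar>1/2 - real_of_int n\<bar> \<le> \<bar>1/2 + t - of_int n\<bar> + \<bar>t\<bar>"
    using abs_triangle_ineq[of "1/2 + t - of_int n" "-t"] by simp
  ultimately have "\<bar>1/2 - real_of_int n\<bar> / 2 \<le> \<bar>1/2 + t - of_int n\<bar>"
    using assms(2) by argo
  then have "\<bar>1/2 + t - of_int n\<bar> powr (-p) \<le> (\<bar>1/2 - real_of_int n\<bar> / 2) powr (-p)"
    using half assms(1) by (intro powr_mono2') auto
  also have "\<dots> = \<bar>1/2 - of_int n\<bar> powr (-p) / 2 powr (-p)"
    by (rule powr_divide)
  also have "\<dots> = 2 powr p * \<bar>1/2 - of_int n\<bar> powr (-p)"
    by (simp add: powr_minus_divide[of 2 p])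
  finally show "\<bar>1/2 + t - of_int n\<bar> powr (-p) \<le> 2 powr p * \<bar>1/2 - of_int n\<bar> powr (-p)" .
qed auto

lemma half_lattice_pair_eq:
  fixes t p :: real and n :: int
  assumes "\<bar>t\<bar> \<le> 1/2"
  shows "\<bar>1/2 + t - of_int n\<bar> powr (-p) + \<bar>1/2 - t - of_int n\<bar> powr (-p)
       = (\<bar>1/2 - of_int n\<bar> + t) powr (-p) + (\<bar>1/2 - of_int n\<bar> - t) powr (-p)"
proof (cases "n \<le> 0")
  case True
  then have "real_of_int n \<le> 0"
    by simp
  then have "\<bar>1/2 + t - of_int n\<bar> = \<bar>1/2 - of_int n\<bar> + t"
    and "\<bar>1/2 - t - of_int n\<bar> = \<bar>1/2 - of_int n\<bar> - t"
    using assms by linarith+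
  then show ?thesis
    by simp
next
  case False
  then have "real_of_int n \<ge> 1"
    by simp
  then have "\<bar>1/2 + t - of_int n\<bar> = \<bar>1/2 - of_int n\<bar> - t"
    and "\<bar>1/2 - t - of_int n\<bar> = \<bar>1/2 - of_int n\<bar> + t"
    using assms by linarith+
  then show ?thesis
    by simp
qed

lemma cos_powr_lattice_sum_le:
  assumes p: "p > 1" and d: "d \<le> 1/4" and t: "\<bar>t\<bar> < d"
    and curv: "\<forall>s. 0 \<le> s \<and> s < d \<longrightarrow> pair_curvature p (real N + 1/2) s \<le> pi^2"
  shows "cos (pi * t) powr p * lattice_sum p N t \<le> lattice_sum p N 0"
proof -
  define g where "g = (\<lambda>t n. \<bar>1/2 + t - real_of_int n\<bar> powr (-p))"
  have sum: "g t' summable_on far_ints N" if "\<bar>t'\<bar> \<le> 1/4" for t'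
    unfolding g_def using summable_on_powr_shifted_half_lattice[OF p that] .
  have "cos (pi * t) powr p * (2 * lattice_sum p N t)
        = infsum (\<lambda>n. cos (pi * t) powr p * (g t n + g (-t) n)) (far_ints N)"
    using infsum_add[OF sum sum, of t "-t"] lattice_sum_minus[of p N t] t d
    unfolding lattice_sum_def g_def by (simp add: infsum_cmult_right')
  also have "\<dots> \<le> infsum (\<lambda>n. 2 * g 0 n) (far_ints N)"
  proof (rule infsum_mono)
    show "(\<lambda>n. cos (pi * t) powr p * (g t n + g (- t) n)) summable_on far_ints N"
      "(\<lambda>n. 2 * g 0 n) summable_on far_ints N"
      using t d by (intro summable_on_cmult_right summable_on_add sum; simp)+
    fix n assume n: "n \<in> far_ints N"
    define a where "a = \<bar>1/2 - real_of_int n\<bar>"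
    have "real N + 1/2 \<le> a"
      unfolding a_def by (rule far_ints_dist_ge[OF n])
    have curv_a: "pair_curvature p a s \<le> pi^2" if s: "0 \<le> s" "s \<le> \<bar>t\<bar>" for s
    proof -
      have "pair_curvature p a s \<le> pair_curvature p (real N + 1/2) s"
        using p s t d \<open>real N + 1/2 \<le> a\<close> by (intro pair_curvature_antimono) auto
      also have "\<dots> \<le> pi^2"
        using curv s t by auto
      finally show ?thesis .
    qed
    have "cos_powr_pair p a t \<le> 2 * a powr (-p)"
      using p t d \<open>real N + 1/2 \<le> a\<close> curv_a by (intro cos_powr_pair_le) auto
    moreover have "g t n + g (-t) n = (a + t) powr (-p) + (a - t) powr (-p)"
      unfolding g_def a_def using half_lattice_pair_eq[of t n p] t d by simp
    ultimately show "cos (pi * t) powr p * (g t n + g (- t) n) \<le> 2 * g 0 n"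
      unfolding cos_powr_pair_def g_def a_def by simp
  qed
  also have "\<dots> = 2 * lattice_sum p N 0"
    unfolding lattice_sum_def g_def by (simp add: infsum_cmult_right')
  finally show ?thesis
    by simp
qed

theorem local_max_point_hpN_half:
  assumes p: "p > 1" and curv: "p + 1 < pi^2 * (real N + 1/2)^2"
  shows "local_max_point (hpN p N) (1/2)"
proof -
  obtain d where d: "d > 0" "d \<le> 1/4"
      and curv_d: "\<forall>s. 0 \<le> s \<and> s < d \<longrightarrow> pair_curvature p (real N + 1/2) s \<le> pi^2"
    using pair_curvature_small[OF _ curv] by auto
  have "hpN p N (1/2 + t) \<le> hpN p N (1/2)" if t: "\<bar>t\<bar> < d" for t
  proof -
    have "hpN p N (1/2 + t) = cos (pi * t) powr p * lattice_sum p N t / pi powr p"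
      using t d hpN_half_shift[of t p N] by (simp add: powr_divide)
    also have "\<dots> \<le> lattice_sum p N 0 / pi powr p"
      by (intro divide_right_mono cos_powr_lattice_sum_le[OF p d(2) t curv_d]) simp
    also have "\<dots> = hpN p N (1/2)"
      using hpN_half_shift[of 0 p N] by (simp add: powr_divide)
    finally show ?thesis .
  qed
  then show ?thesis
    unfolding local_max_point_def using d(1) by (metis add.commute diff_add_cancel)
qed

theorem corollary1:
  fixes p :: real
  assumes "p > 1"
  shows "(\<forall>N::nat. N \<ge> 1 \<and> real N \<ge> sqrt ((p + 2) * (1 + 1 / p)) / pi - 1 / 2
            \<longrightarrow> local_max_point (hpN p N) (1 / 2))
       \<and> (p \<le> (9 * pi^2 + sqrt (16 - 216 * pi^2 + 81 * pi^4) - 12) / 8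
            \<longrightarrow> (\<forall>N::nat. N \<ge> 1 \<longrightarrow> local_max_point (hpN p N) (1 / 2)))"
proof (intro conjI allI impI)
  fix N :: nat
  assume "N \<ge> 1 \<and> real N \<ge> sqrt ((p + 2) * (1 + 1 / p)) / pi - 1 / 2"
  then have "sqrt ((p + 2) * (1 + 1 / p)) \<le> pi * (real N + 1/2)"
    by (simp add: field_simps)
  then have "(p + 2) * (1 + 1 / p) \<le> pi^2 * (real N + 1/2)^2"
    by (metis sqrt_le_D power_mult_distrib)
  moreover have "(p + 2) * (1 + 1 / p) = (p + 1) + (p + 2) / p + 1"
    using assms by (simp add: field_simps)
  ultimately have "p + 1 < pi^2 * (real N + 1/2)^2"
    using assms by (smt (verit) divide_pos_pos)
  then show "local_max_point (hpN p N) (1 / 2)"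
    by (rule local_max_point_hpN_half[OF assms])
next
  fix N :: nat
  assume hp: "p \<le> (9 * pi^2 + sqrt (16 - 216 * pi^2 + 81 * pi^4) - 12) / 8" and N: "N \<ge> 1"
  have "sqrt (16 - 216 * pi^2 + 81 * pi^4) < sqrt ((9 * pi^2 + 4)^2)"
    by (intro real_sqrt_less_mono) (simp add: power2_eq_square power4_eq_xxxx algebra_simps)
  then have "p + 1 < pi^2 * (9/4)"
    using hp by simp
  also have "\<dots> \<le> pi^2 * (real N + 1/2)^2"
    using power_mono[of "3/2" "real N + 1/2" 2] N by (intro mult_left_mono) (auto simp: power2_eq_square)
  finally show "local_max_point (hpN p N) (1 / 2)"
    by (rule local_max_point_hpN_half[OF assms])
qed

end
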